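(* Let $n\ge2$ and let $\mathcal{C}([n])$ be the lattice of one-cluster partitions of $[n]$ ordered by refinement. Then for every $\pi\in\mathcal{C}([n])$, $$\mathfrak{m}(\pi,[n])=\begin{cases}(-1)^{n-1}(n-1)&\text{if }\pi=1|2|\cdots|n,\\(-1)^{|\pi|-1}&\text{otherwise},\end{cases}$$ where $|\pi|$ is the number of blocks of $\pi$.
   Context: A one-cluster partition of $[n]$ is a set partition with at most one block of size greater than one. The refinement order: $\pi\le\nu$ iff every block of $\pi$ is contained in a block of $\nu$. The Möbius function of a finite poset is defined by $\mathfrak{m}(\pi,\pi)=1$, $\mathfrak{m}(\pi,\nu)=-\sum_{\pi\le\delta<\nu}\mathfrak{m}(\pi,\delta)$ for $\pi<\nu$, and $0$ otherwise. *)

theory Defs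
  imports "HOL-Library.Disjoint_Sets"
begin

definition refines_part :: "'a set set \<Rightarrow> 'a set set \<Rightarrow> bool" where
  "refines_part p q \<longleftrightarrow> (\<forall>B\<in>p. \<exists>C\<in>q. B \<subseteq> C)"

definition one_cluster_partitions :: "nat \<Rightarrow> nat set set set" where
  "one_cluster_partitions n =
     {p. partition_on {1..n} p \<and> card {B\<in>p. card B > 1} \<le> 1}"

text \<open>The recursion is unrolled with a fuel parameter; fuel card P suffices
  since every chain in P has at most card P elements.\<close>
fun mobius_aux :: "nat \<Rightarrow> 'a set \<Rightarrow> ('a \<Rightarrow> 'a \<Rightarrow> bool) \<Rightarrow> 'a \<Rightarrow> 'a \<Rightarrow> int" where
  "mobius_aux 0 P le x y = 0"
| "mobius_aux (Suc k) P le x y =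
     (if x = y then 1
      else if le x y then
        - (\<Sum>d\<in>{d\<in>P. le x d \<and> le d y \<and> d \<noteq> y}. mobius_aux k P le x d)
      else 0)"

definition mobius :: "'a set \<Rightarrow> ('a \<Rightarrow> 'a \<Rightarrow> bool) \<Rightarrow> 'a \<Rightarrow> 'a \<Rightarrow> int" where
  "mobius P le x y = mobius_aux (card P) P le x y"

end

theory Submission
  imports Defs
begin

(*
  A one-cluster partition is determined by its cluster: the non-singleton block, or the
  empty set for the discrete partition.  The map D \<mapsto> cluster_partition n D is therefore an
  order isomorphism from  cluster_sets n = {D \<subseteq> [n]. |D| \<noteq> 1}, ordered by inclusion,
  onto the one-cluster partitions ordered by refinement.
*)

section \<open>The Moebius function of a finite poset\<close>

lemma mobius_aux_order_iso:
  assumes bij: "bij_betw h Q P"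
    and iso: "\<And>a b. a \<in> Q \<Longrightarrow> b \<in> Q \<Longrightarrow> le (h a) (h b) = le' a b"
    and a: "a \<in> Q" and b: "b \<in> Q"
  shows "mobius_aux k P le (h a) (h b) = mobius_aux k Q le' a b"
  using b
proof (induction k arbitrary: b)
  case 0
  then show ?case by simp
next
  case (Suc k)
  have inj: "inj_on h Q" and img: "h ` Q = P"
    using bij by (auto simp: bij_betw_def)
  let ?S = "{d\<in>Q. le' a d \<and> le' d b \<and> d \<noteq> b}"
  have interval: "{d\<in>P. le (h a) d \<and> le d (h b) \<and> d \<noteq> h b} = h ` ?S"
    using iso[OF a] iso[OF _ Suc.prems] img Suc.prems inj_on_eq_iff[OF inj] by fastforce
  have "(\<Sum>d\<in>h ` ?S. mobius_aux k P le (h a) d) = (\<Sum>d\<in>?S. mobius_aux k P le (h a) (h d))"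
    by (rule sum.reindex_cong[where l = h]) (use inj in \<open>auto intro: inj_on_subset\<close>)
  also have "\<dots> = (\<Sum>d\<in>?S. mobius_aux k Q le' a d)"
    by (rule sum.cong) (auto intro: Suc.IH)
  finally show ?case
    using interval iso[OF a Suc.prems] inj_on_eq_iff[OF inj a Suc.prems] by simp
qed

lemma mobius_order_iso:
  assumes "bij_betw h Q P"
    and "\<And>a b. a \<in> Q \<Longrightarrow> b \<in> Q \<Longrightarrow> le (h a) (h b) = le' a b"
    and "a \<in> Q" "b \<in> Q"
  shows "mobius P le (h a) (h b) = mobius Q le' a b"
  using mobius_aux_order_iso[of h Q P le le' a b "card P"] assms bij_betw_same_card[OF assms(1)]
  unfolding mobius_def by simp

lemma mobius_aux_eqI:
  assumes refl_le: "\<And>a. a \<in> P \<Longrightarrow> le a a"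
    and trans_le: "\<And>a b c. a \<in> P \<Longrightarrow> b \<in> P \<Longrightarrow> c \<in> P \<Longrightarrow> le a b \<Longrightarrow> le b c \<Longrightarrow> le a c"
    and antisym_le: "\<And>a b. a \<in> P \<Longrightarrow> b \<in> P \<Longrightarrow> le a b \<Longrightarrow> le b a \<Longrightarrow> a = b"
    and fin: "finite P" and x: "x \<in> P"
    and f_base: "f x = 1"
    and f_rec: "\<And>y. y \<in> P \<Longrightarrow> le x y \<Longrightarrow> y \<noteq> x \<Longrightarrow>
                  f y = - (\<Sum>d\<in>{d\<in>P. le x d \<and> le d y \<and> d \<noteq> y}. f d)"
  shows "y \<in> P \<Longrightarrow> le x y \<Longrightarrow> card {d\<in>P. le x d \<and> le d y} \<le> k \<Longrightarrow>
           mobius_aux k P le x y = f y"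
proof (induction k arbitrary: y)
  case 0
  then have "y \<in> {d\<in>P. le x d \<and> le d y}" using refl_le by simp
  then show ?case using 0 fin by (simp add: card_gt_0_iff)
next
  case (Suc k)
  let ?I = "\<lambda>y. {d\<in>P. le x d \<and> le d y}"
  show ?case
  proof (cases "x = y")
    case True
    then show ?thesis using f_base by simp
  next
    case False
    let ?S = "{d\<in>P. le x d \<and> le d y \<and> d \<noteq> y}"
    have "mobius_aux k P le x d = f d" if d: "d \<in> ?S" for d
    proof -
      have "?I d \<subseteq> ?I y - {y}"
        using d Suc.prems trans_le antisym_le by blast
      moreover have "y \<in> ?I y" using Suc.prems refl_le by simp
      ultimately have "card (?I d) < card (?I y)"
        using fin by (intro psubset_card_mono) auto
      then show ?thesis using d Suc.prems by (intro Suc.IH) auto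
    qed
    then have "(\<Sum>d\<in>?S. mobius_aux k P le x d) = (\<Sum>d\<in>?S. f d)"
      by (rule sum.cong[OF refl])
    then show ?thesis
      using False Suc.prems f_rec[of y] by simp
  qed
qed

lemma mobius_eqI:
  assumes "\<And>a. a \<in> P \<Longrightarrow> le a a"
    and "\<And>a b c. a \<in> P \<Longrightarrow> b \<in> P \<Longrightarrow> c \<in> P \<Longrightarrow> le a b \<Longrightarrow> le b c \<Longrightarrow> le a c"
    and "\<And>a b. a \<in> P \<Longrightarrow> b \<in> P \<Longrightarrow> le a b \<Longrightarrow> le b a \<Longrightarrow> a = b"
    and "finite P" "x \<in> P" "f x = 1"
    and "\<And>y. y \<in> P \<Longrightarrow> le x y \<Longrightarrow> y \<noteq> x \<Longrightarrow>
           f y = - (\<Sum>d\<in>{d\<in>P. le x d \<and> le d y \<and> d \<noteq> y}. f d)"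
    and "y \<in> P" "le x y"
  shows "mobius P le x y = f y"
  unfolding mobius_def
  by (rule mobius_aux_eqI[OF assms]) (use \<open>finite P\<close> in \<open>auto intro: card_mono\<close>)

section \<open>Alternating sums over power sets\<close>

lemma sum_Pow_insert:
  assumes "finite S" "a \<notin> S"
  shows "sum g (Pow (insert a S)) = sum g (Pow S) + (\<Sum>E\<in>Pow S. g (insert a E))"
proof -
  have inj: "inj_on (insert a) (Pow S)"
    using assms(2) by (intro inj_onI) (metis PowD subsetD insert_ident)
  have "sum g (Pow (insert a S)) = sum g (Pow S) + sum g (insert a ` Pow S)"
    unfolding Pow_insert by (rule sum.union_disjoint) (use assms in auto)
  also have "sum g (insert a ` Pow S) = (\<Sum>E\<in>Pow S. g (insert a E))"
    by (subst sum.reindex[OF inj]) (simp add: comp_def)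
  finally show ?thesis .
qed

lemma alternating_sum_Pow:
  assumes "finite S" "S \<noteq> {}"
  shows "(\<Sum>E\<in>Pow S. (-1::int) ^ card E) = 0"
  using prod_diff_conv_sum[of S "\<lambda>_. 1::int" "\<lambda>_. 1"] assms by (simp add: power_0_left)

text \<open>The weighted alternating sum needed for the discrete partition.\<close>
lemma alternating_linear_sum_Pow:
  assumes "finite S" "card S \<ge> 2"
  shows "(\<Sum>E\<in>Pow S. (-1::int) ^ card E * (1 - int (card E))) = 0"
proof -
  obtain a T where S: "S = insert a T" "a \<notin> T"
    using assms by (metis card.empty Set.set_insert ex_in_conv not_numeral_le_zero)
  have fT: "finite T" and T_ne: "T \<noteq> {}" using assms S by auto
  have shift: "(-1::int) ^ card (insert a E) * (1 - int (card (insert a E)))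
                 = (-1) ^ card E * int (card E)" if "E \<in> Pow T" for E
  proof -
    have "finite E" "a \<notin> E" using that fT S(2) finite_subset by auto
    then show ?thesis by (simp add: algebra_simps)
  qed
  have "(\<Sum>E\<in>Pow S. (-1::int) ^ card E * (1 - int (card E)))
        = (\<Sum>E\<in>Pow T. (-1) ^ card E * (1 - int (card E)) + (-1) ^ card E * int (card E))"
    unfolding S sum_Pow_insert[OF fT S(2)] by (simp add: shift sum.distrib)
  also have "\<dots> = (\<Sum>E\<in>Pow T. (-1) ^ card E)" by (simp add: algebra_simps)
  also have "\<dots> = 0" by (rule alternating_sum_Pow[OF fT T_ne])
  finally show ?thesis .
qed

section \<open>One-cluster partitions are determined by their cluster\<close>

text \<open>Admissible clusters: subsets of [n] that are not singletons ({} encodes the discrete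
  partition).\<close>
definition cluster_sets :: "nat \<Rightarrow> nat set set" where
  "cluster_sets n = {D. D \<subseteq> {1..n} \<and> card D \<noteq> 1}"

definition cluster_partition :: "nat \<Rightarrow> nat set \<Rightarrow> nat set set" where
  "cluster_partition n D = (if D = {} then {} else {D}) \<union> (\<lambda>i. {i}) ` ({1..n} - D)"

lemma finite_cluster_sets: "finite (cluster_sets n)"
  unfolding cluster_sets_def by (rule finite_subset[of _ "Pow {1..n}"]) auto

lemma cluster_partition_one_cluster:
  assumes "D \<in> cluster_sets n"
  shows "cluster_partition n D \<in> one_cluster_partitions n"
proof -
  have "partition_on {1..n} (cluster_partition n D)"
    using assms unfolding cluster_sets_def partition_on_def disjoint_def cluster_partition_def
    by auto
  moreover have "{B\<in>cluster_partition n D. card B > 1} \<subseteq> {D}"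
    unfolding cluster_partition_def by auto
  then have "card {B\<in>cluster_partition n D. card B > 1} \<le> 1"
    using card_mono[of "{D}"] by simp
  ultimately show ?thesis unfolding one_cluster_partitions_def by simp
qed

text \<open>Refinement between one-cluster partitions is inclusion of clusters; this uses that
  clusters are never singletons.\<close>
lemma cluster_partition_refines_iff:
  assumes C: "C \<in> cluster_sets n" and D: "D \<in> cluster_sets n"
  shows "refines_part (cluster_partition n C) (cluster_partition n D) \<longleftrightarrow> C \<subseteq> D"
proof
  assume r: "refines_part (cluster_partition n C) (cluster_partition n D)"
  show "C \<subseteq> D"
  proof (cases "C = {}")
    case False
    then have "C \<in> cluster_partition n C" unfolding cluster_partition_def by simp
    then obtain B where B: "B \<in> cluster_partition n D" "C \<subseteq> B"
      using r unfolding refines_part_def by blast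
    show ?thesis
    proof (cases "B = D")
      case False
      then obtain i where "B = {i}"
        using B(1) unfolding cluster_partition_def by (auto split: if_splits)
      then have "card C \<le> 1" using B(2) card_mono[of "{i}" C] by simp
      moreover have "finite C" using C unfolding cluster_sets_def by (auto intro: finite_subset)
      ultimately show ?thesis using C \<open>C \<noteq> {}\<close> unfolding cluster_sets_def by (simp add: le_Suc_eq)
    qed (use B in auto)
  qed simp
next
  assume "C \<subseteq> D"
  then show "refines_part (cluster_partition n C) (cluster_partition n D)"
    unfolding refines_part_def cluster_partition_def by auto
qed

lemma small_block_singleton:
  assumes "partition_on A p" "finite A" "B \<in> p" "\<not> card B > 1"
  obtains j where "B = {j}"
proof -
  have "B \<noteq> {}" "finite B"
    using assms unfolding partition_on_def by (auto intro: finite_subset)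
  then have "card B = 1" using assms(4) by (simp add: Suc_leI card_gt_0_iff le_antisym)
  then show ?thesis using that by (metis card_1_singletonE)
qed

lemma one_cluster_partition_cluster:
  assumes "p \<in> one_cluster_partitions n"
  obtains D where "D \<in> cluster_sets n" "p = cluster_partition n D"
proof -
  have pa: "partition_on {1..n} p" and c: "card {B\<in>p. card B > 1} \<le> 1"
    using assms unfolding one_cluster_partitions_def by auto
  have U: "\<Union>p = {1..n}" and dj: "disjoint p" using pa unfolding partition_on_def by auto
  have "finite p" using U by (metis finite_UnionD finite_atLeastAtMost)
  then have fin_large: "finite {B\<in>p. card B > 1}" by simp
  obtain D where large: "{B\<in>p. card B > 1} \<subseteq> {D}" and D: "D = {} \<or> (D \<in> p \<and> card D > 1)"
  proof (cases "{B\<in>p. card B > 1} = {}")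
    case True
    then show ?thesis using that[of "{}"] by blast
  next
    case False
    then have "card {B\<in>p. card B > 1} = 1"
      using c fin_large by (metis card_0_eq le_Suc_eq le_zero_eq One_nat_def)
    then obtain D where "{B\<in>p. card B > 1} = {D}" by (rule card_1_singletonE)
    then show ?thesis using that[of D] by auto
  qed
  have small: "\<exists>j. B = {j}" if "B \<in> p" "B \<noteq> D" for B
    using small_block_singleton[OF pa _ that(1)] large that by blast
  have "p = cluster_partition n D"
  proof (intro equalityI subsetI)
    fix B assume B: "B \<in> p"
    show "B \<in> cluster_partition n D"
    proof (cases "B = D")
      case False
      then obtain j where j: "B = {j}" using small B by blast
      have "B \<inter> D = {}"
        using D dj B False unfolding disjoint_def by auto
      then have "j \<notin> D" using j by auto
      moreover have "j \<in> {1..n}" using U B j by auto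
      ultimately show ?thesis using j unfolding cluster_partition_def by auto
    qed (use B pa in \<open>auto simp: cluster_partition_def partition_on_def\<close>)
  next
    fix B assume B: "B \<in> cluster_partition n D"
    show "B \<in> p"
    proof (cases "B = D")
      case False
      then obtain i where i: "B = {i}" "i \<in> {1..n}" "i \<notin> D"
        using B unfolding cluster_partition_def by (auto split: if_splits)
      then obtain B' where B': "B' \<in> p" "i \<in> B'" using U by blast
      then have "B' \<noteq> D" using i by auto
      then show "B \<in> p" using small[OF B'(1)] B' i by auto
    qed (use B D in \<open>auto simp: cluster_partition_def\<close>)
  qed
  moreover have "D \<in> cluster_sets n"
    using D U unfolding cluster_sets_def by auto
  ultimately show ?thesis using that by blast
qed

lemma bij_cluster_partition:
  "bij_betw (cluster_partition n) (cluster_sets n) (one_cluster_partitions n)"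
  unfolding bij_betw_def
proof
  show "inj_on (cluster_partition n) (cluster_sets n)"
    by (rule inj_onI) (metis cluster_partition_refines_iff subset_antisym subset_refl)
  show "cluster_partition n ` cluster_sets n = one_cluster_partitions n"
    using cluster_partition_one_cluster one_cluster_partition_cluster by blast
qed

section \<open>The Moebius function on cluster sets\<close>

definition cluster_mobius :: "nat set \<Rightarrow> nat set \<Rightarrow> int" where
  "cluster_mobius C D =
     (if C = {} then (-1) ^ card D * (1 - int (card D)) else (-1) ^ (card D - card C))"

lemma cluster_mobius_interval_sum:
  assumes C: "C \<in> cluster_sets n" and D: "D \<in> cluster_sets n" and CD: "C \<subset> D"
  shows "(\<Sum>d\<in>{d\<in>cluster_sets n. C \<subseteq> d \<and> d \<subseteq> D}. cluster_mobius C d) = 0"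
proof -
  have fD: "finite D" and fC: "finite C"
    using C D unfolding cluster_sets_def by (auto intro: finite_subset)
  show ?thesis
  proof (cases "C = {}")
    case True
    text \<open>The interval is Pow D without the singletons, whose terms vanish anyway.\<close>
    have cD: "card D \<ge> 2"
      using D CD True fD unfolding cluster_sets_def by (cases "card D") auto
    have "(\<Sum>d\<in>{d\<in>cluster_sets n. C \<subseteq> d \<and> d \<subseteq> D}. cluster_mobius C d)
          = (\<Sum>d\<in>Pow D. cluster_mobius C d)"
      by (rule sum.mono_neutral_left)
         (use fD True D in \<open>auto simp: cluster_mobius_def cluster_sets_def\<close>)
    also have "\<dots> = 0"
      using alternating_linear_sum_Pow[OF fD cD] True by (simp add: cluster_mobius_def)
    finally show ?thesis .
  next
    case False
    text \<open>Every superset of C is again a cluster set, so the interval is Boolean.\<close>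
    have cC: "card C \<ge> 2"
      using C False fC unfolding cluster_sets_def by (cases "card C") auto
    have interval: "{d\<in>cluster_sets n. C \<subseteq> d \<and> d \<subseteq> D} = (\<union>) C ` Pow (D - C)"
    proof (intro equalityI subsetI)
      fix d assume "d \<in> {d\<in>cluster_sets n. C \<subseteq> d \<and> d \<subseteq> D}"
      then have "d = C \<union> (d - C)" "d - C \<in> Pow (D - C)" by auto
      then show "d \<in> (\<union>) C ` Pow (D - C)" by blast
    next
      fix d assume "d \<in> (\<union>) C ` Pow (D - C)"
      then obtain E where E: "E \<subseteq> D - C" "d = C \<union> E" by auto
      have "card C \<le> card d" using E fD fC by (intro card_mono) (auto intro: finite_subset)
      then show "d \<in> {d\<in>cluster_sets n. C \<subseteq> d \<and> d \<subseteq> D}"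
        using E cC D CD unfolding cluster_sets_def by auto
    qed
    have inj: "inj_on ((\<union>) C) (Pow (D - C))" by (rule inj_onI) blast
    have summand: "cluster_mobius C (C \<union> E) = (-1) ^ card E" if "E \<in> Pow (D - C)" for E
    proof -
      have "card (C \<union> E) = card C + card E"
        using that fD fC by (subst card_Un_disjoint) (auto intro: finite_subset)
      then show ?thesis using False by (simp add: cluster_mobius_def)
    qed
    have "(\<Sum>d\<in>{d\<in>cluster_sets n. C \<subseteq> d \<and> d \<subseteq> D}. cluster_mobius C d)
          = (\<Sum>E\<in>Pow (D - C). (-1) ^ card E)"
      unfolding interval sum.reindex[OF inj] by (simp add: summand)
    also have "\<dots> = 0" by (rule alternating_sum_Pow) (use fD CD in auto)
    finally show ?thesis .
  qed
qed

lemma mobius_cluster_sets: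
  assumes "C \<in> cluster_sets n" "D \<in> cluster_sets n" "C \<subseteq> D"
  shows "mobius (cluster_sets n) (\<subseteq>) C D = cluster_mobius C D"
proof (rule mobius_eqI[where f = "cluster_mobius C"])
  fix y assume y: "y \<in> cluster_sets n" "C \<subseteq> y" "y \<noteq> C"
  have "{d\<in>cluster_sets n. C \<subseteq> d \<and> d \<subseteq> y}
        = insert y {d\<in>cluster_sets n. C \<subseteq> d \<and> d \<subseteq> y \<and> d \<noteq> y}"
    using y by auto
  then show "cluster_mobius C y
             = - (\<Sum>d\<in>{d\<in>cluster_sets n. C \<subseteq> d \<and> d \<subseteq> y \<and> d \<noteq> y}. cluster_mobius C d)"
    using cluster_mobius_interval_sum[OF assms(1) y(1)] y finite_cluster_sets
    by (simp add: psubset_eq)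
qed (use assms finite_cluster_sets in \<open>auto simp: cluster_mobius_def\<close>)

lemma card_cluster_partition:
  assumes "D \<in> cluster_sets n" "D \<noteq> {}"
  shows "card (cluster_partition n D) = Suc (n - card D)"
proof -
  have D: "D \<subseteq> {1..n}" "finite D"
    using assms unfolding cluster_sets_def by (auto intro: finite_subset)
  moreover have "card D \<ge> 2"
    using assms D(2) unfolding cluster_sets_def by (cases "card D") auto
  ultimately have "D \<notin> (\<lambda>i. {i}) ` ({1..n} - D)" by auto
  then have "card (cluster_partition n D) = Suc (card ((\<lambda>i. {i}) ` ({1..n} - D)))"
    using assms(2) unfolding cluster_partition_def by simp
  also have "\<dots> = Suc (n - card D)"
    using D by (subst card_image) (auto simp: card_Diff_subset)
  finally show ?thesis .
qed

theorem mainTheorem11: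
  fixes n :: nat and \<pi> :: "nat set set"
  assumes "n \<ge> 2" and "\<pi> \<in> one_cluster_partitions n"
  shows "mobius (one_cluster_partitions n) refines_part \<pi> {{1..n}} =
           (if \<pi> = (\<lambda>i. {i}) ` {1..n}
            then (-1) ^ (n - 1) * int (n - 1)
            else (-1) ^ (card \<pi> - 1))"
proof -
  obtain D where D: "D \<in> cluster_sets n" and \<pi>: "\<pi> = cluster_partition n D"
    using one_cluster_partition_cluster[OF assms(2)] .
  have top: "{1..n} \<in> cluster_sets n" "{{1..n}} = cluster_partition n {1..n}"
    using assms(1) unfolding cluster_sets_def cluster_partition_def by auto
  have "mobius (one_cluster_partitions n) refines_part \<pi> {{1..n}}
        = mobius (cluster_sets n) (\<subseteq>) D {1..n}"
    unfolding \<pi> top(2)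
    by (intro mobius_order_iso[OF bij_cluster_partition] cluster_partition_refines_iff D top(1))
  also have "\<dots> = cluster_mobius D {1..n}"
    by (rule mobius_cluster_sets[OF D top(1)]) (use D in \<open>simp add: cluster_sets_def\<close>)
  finally have M: "mobius (one_cluster_partitions n) refines_part \<pi> {{1..n}}
                   = cluster_mobius D {1..n}" .
  have "(\<lambda>i. {i}) ` {1..n} = cluster_partition n {}" "{} \<in> cluster_sets n"
    by (simp_all add: cluster_partition_def cluster_sets_def)
  then have discrete_iff: "\<pi> = (\<lambda>i. {i}) ` {1..n} \<longleftrightarrow> D = {}"
    unfolding \<pi> using inj_on_eq_iff[OF bij_betw_imp_inj_on[OF bij_cluster_partition] D] by simp
  show ?thesis
  proof (cases "D = {}")
    case True
    obtain m where "n = Suc m" using assms(1) by (cases n) auto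
    then show ?thesis using M discrete_iff True by (simp add: cluster_mobius_def)
  next
    case False
    then show ?thesis using M discrete_iff card_cluster_partition[OF D False] \<pi>
      by (simp add: cluster_mobius_def)
  qed
qed

end
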